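(* Let $n$ and $m$ be integers with $n\geq 5$ and $m\geq 5$. For each $G\in T_{n,m}\setminus T_{n,m}^*$ there exists $H\in T_{n,m}^*$ that is $3$-stronger than $G$.
   Context: All graphs are finite, simple and undirected. A two-terminal graph is a graph $G$ together with two distinguished vertices $s,t$ (the terminals). $T_{n,m}$ denotes the set of all pairwise nonisomorphic (with isomorphisms preserving the set of terminals) two-terminal graphs with $n$ vertices and $m$ edges. Two vertices $u,v$ are true twins if $N[u]=N[v]$ (closed neighborhoods). For a positive integer $d$, a $d$-pathset of a two-terminal graph $G$ is a spanning subgraph of $G$ containing a path of length (number of edges) at most $d$ joining $s$ and $t$; $N_i^d(G)$ is the number of $d$-pathsets of $G$ with exactly $i$ edges. An edge $e$ of $G$ is $d$-irrelevant if for every $d$-pathset $H$ of $G$ containing $e$, $H-e$ is also a $d$-pathset. $T_{n,m}^*$ is the set of graphs in $T_{n,m}$ with no $3$-irrelevant edges whose terminals are true twins. For $G,H\in T_{n,m}$, $H$ is $d$-stronger than $G$ if $N_i^d(H)\geq N_i^d(G)$ for every $i\in\{1,\ldots,m\}$ and $N_j^d(H)>N_j^d(G)$ for some $j\in\{1,\ldots,m\}$. *)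

theory Defs
  imports Main
begin

definition tt_graph :: "nat \<Rightarrow> nat \<Rightarrow> nat set set \<Rightarrow> nat \<Rightarrow> nat \<Rightarrow> bool" where
  "tt_graph n m E s t \<longleftrightarrow>
     E \<subseteq> {e. \<exists>u v. e = {u, v} \<and> u \<noteq> v \<and> u < n \<and> v < n} \<and> card E = m \<and>
     s < n \<and> t < n \<and> s \<noteq> t"

definition is_path :: "nat set set \<Rightarrow> nat \<Rightarrow> nat \<Rightarrow> nat list \<Rightarrow> bool" where
  "is_path F s t vs \<longleftrightarrow> vs \<noteq> [] \<and> hd vs = s \<and> last vs = t \<and> distinct vs \<and>
     (\<forall>i. Suc i < length vs \<longrightarrow> {vs ! i, vs ! Suc i} \<in> F)"

text \<open>F (a spanning subgraph, given by its edge set) is a d-pathset.\<close>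
definition pathset :: "nat \<Rightarrow> nat set set \<Rightarrow> nat \<Rightarrow> nat \<Rightarrow> bool" where
  "pathset d F s t \<longleftrightarrow> (\<exists>vs. is_path F s t vs \<and> length vs - 1 \<le> d)"

definition Nid :: "nat \<Rightarrow> nat \<Rightarrow> nat set set \<Rightarrow> nat \<Rightarrow> nat \<Rightarrow> nat" where
  "Nid d i E s t = card {F. F \<subseteq> E \<and> card F = i \<and> pathset d F s t}"

definition irrelevant :: "nat \<Rightarrow> nat set set \<Rightarrow> nat \<Rightarrow> nat \<Rightarrow> nat set \<Rightarrow> bool" where
  "irrelevant d E s t e \<longleftrightarrow>
     (\<forall>F. F \<subseteq> E \<and> e \<in> F \<and> pathset d F s t \<longrightarrow> pathset d (F - {e}) s t)"

definition closed_nbhd :: "nat set set \<Rightarrow> nat \<Rightarrow> nat set" where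
  "closed_nbhd E u = insert u {v. {u, v} \<in> E}"

definition true_twins :: "nat set set \<Rightarrow> nat \<Rightarrow> nat \<Rightarrow> bool" where
  "true_twins E u v \<longleftrightarrow> closed_nbhd E u = closed_nbhd E v"

text \<open>Membership in T*_{n,m} (for a graph already in T_{n,m}).\<close>
definition in_Tstar :: "nat set set \<Rightarrow> nat \<Rightarrow> nat \<Rightarrow> bool" where
  "in_Tstar E s t \<longleftrightarrow> true_twins E s t \<and> (\<forall>e\<in>E. \<not> irrelevant 3 E s t e)"

text \<open>(E',s',t') is d-stronger than (E,s,t), both having m edges.\<close>
definition stronger :: "nat \<Rightarrow> nat \<Rightarrow> nat set set \<Rightarrow> nat \<Rightarrow> nat \<Rightarrow> nat set set \<Rightarrow> nat \<Rightarrow> nat \<Rightarrow> bool" where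
  "stronger d m E' s' t' E s t \<longleftrightarrow>
     (\<forall>i\<in>{1..m}. Nid d i E' s' t' \<ge> Nid d i E s t) \<and>
     (\<exists>j\<in>{1..m}. Nid d j E' s' t' > Nid d j E s t)"

end

theory Submission
  imports Defs
begin

text \<open>
  It suffices to improve every graph outside \<open>T*\<close> to a strictly 3-stronger one with the same
  vertices, edge count and terminals: 3-strength is transitive, and the total number of 3-pathsets,
  which strictly grows, is bounded by \<open>m 2^m\<close>. Each improvement replaces one edge and comes with
  an injection from the 3-pathsets of the old graph into those of the new one that preserves
  size and misses some pathset.

  If \<open>s\<close> and \<open>t\<close> are not adjacent, any edge is replaced by \<open>st\<close>. If \<open>s\<close> has a private
  neighbour \<open>v\<close> (adjacent to \<open>s\<close> but not to \<open>t\<close>), either \<open>v\<close> reaches \<open>t\<close> through some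
  \<open>b \<noteq> s\<close> and \<open>vb\<close> is replaced by \<open>vt\<close>, or \<open>sv\<close> lies on no short path and can be moved to
  where it closes a new one. Only one configuration resists this: a clique on \<open>s\<close>, \<open>t\<close> and
  their common neighbours plus the pendant edge \<open>sv\<close>; there \<open>m \<ge> 5\<close> provides two common
  neighbours \<open>c1, c2\<close>, and \<open>c1c2\<close> is replaced by \<open>tv\<close>. If finally \<open>s\<close> and \<open>t\<close> are true twins,
  some edge is irrelevant; moving it to \<open>s\<close> loses nothing and creates a private neighbour.
\<close>

definition path_le3 :: "nat set set \<Rightarrow> nat \<Rightarrow> nat \<Rightarrow> bool" where
  "path_le3 F s t \<longleftrightarrow> {s,t} \<in> F \<or> (\<exists>x. x \<noteq> s \<and> x \<noteq> t \<and> {s,x} \<in> F \<and> {x,t} \<in> F) \<or>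
     (\<exists>x y. x \<noteq> s \<and> x \<noteq> t \<and> y \<noteq> s \<and> y \<noteq> t \<and> x \<noteq> y \<and> {s,x} \<in> F \<and> {x,y} \<in> F \<and> {y,t} \<in> F)"

lemma path_le3_edge: "{s,t} \<in> F \<Longrightarrow> path_le3 F s t"
  unfolding path_le3_def by blast

lemma path_le3_via:
  "x \<noteq> s \<Longrightarrow> x \<noteq> t \<Longrightarrow> {s,x} \<in> F \<Longrightarrow> {x,t} \<in> F \<Longrightarrow> path_le3 F s t"
  unfolding path_le3_def by blast

lemma path_le3_via2:
  "x \<noteq> s \<Longrightarrow> x \<noteq> t \<Longrightarrow> y \<noteq> s \<Longrightarrow> y \<noteq> t \<Longrightarrow> x \<noteq> y \<Longrightarrow>
    {s,x} \<in> F \<Longrightarrow> {x,y} \<in> F \<Longrightarrow> {y,t} \<in> F \<Longrightarrow> path_le3 F s t"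
  unfolding path_le3_def by blast

lemma path_le3_cases [consumes 1, case_names edge via via2]:
  assumes "path_le3 F s t"
  obtains "{s,t} \<in> F"
    | x where "x \<noteq> s" "x \<noteq> t" "{s,x} \<in> F" "{x,t} \<in> F"
    | x y where "x \<noteq> s" "x \<noteq> t" "y \<noteq> s" "y \<noteq> t" "x \<noteq> y" "{s,x} \<in> F" "{x,y} \<in> F" "{y,t} \<in> F"
  using assms unfolding path_le3_def by blast

lemma path_le3_mono: "path_le3 F s t \<Longrightarrow> F \<subseteq> G \<Longrightarrow> path_le3 G s t"
  unfolding path_le3_def by blast

lemma path_le3_commute: "path_le3 F s t \<longleftrightarrow> path_le3 F t s"
proof -
  have "path_le3 F t s" if "path_le3 F s t" for s t
    using that
  proof (cases rule: path_le3_cases)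
    case edge
    then show ?thesis by (simp add: path_le3_edge insert_commute)
  next
    case (via x)
    then show ?thesis by (intro path_le3_via[of x]) (simp_all add: insert_commute)
  next
    case (via2 x y)
    then show ?thesis by (intro path_le3_via2[of y _ _ x]) (simp_all add: insert_commute)
  qed
  then show ?thesis by blast
qed

lemma not_path_le3_if_isolated: "(\<And>e. e \<in> F \<Longrightarrow> t \<notin> e) \<Longrightarrow> \<not> path_le3 F s t"
  unfolding path_le3_def by blast

lemma not_path_le3_if_isolated_source: "(\<And>e. e \<in> F \<Longrightarrow> s \<notin> e) \<Longrightarrow> \<not> path_le3 F s t"
  unfolding path_le3_def by blast

lemma not_path_le3_disjoint_edges:
  assumes "x \<noteq> s" "x \<noteq> t" "y \<noteq> s" "y \<noteq> t" "x \<noteq> y" "s \<noteq> t"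
  shows "\<not> path_le3 {{s,x},{y,t}} s t"
  using assms unfolding path_le3_def by (auto simp: doubleton_eq_iff)

lemma pathset_3_iff_path_le3:
  assumes "s \<noteq> t"
  shows "pathset 3 F s t \<longleftrightarrow> path_le3 F s t"
proof
  assume "pathset 3 F s t"
  then obtain vs where "is_path F s t vs" and len: "length vs \<le> 4"
    unfolding pathset_def by fastforce
  then have edge: "\<And>i. Suc i < length vs \<Longrightarrow> {vs ! i, vs ! Suc i} \<in> F"
    and ends: "vs \<noteq> []" "hd vs = s" "last vs = t" and "distinct vs"
    unfolding is_path_def by auto
  then consider a where "vs = [a]" | a b where "vs = [a,b]" | a b c where "vs = [a,b,c]"
    | a b c d where "vs = [a,b,c,d]"
    using len ends(1) by (auto simp: le_Suc_eq length_Suc_conv numeral_eq_Suc)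
  then show "path_le3 F s t"
  proof cases
    case 1
    then show ?thesis using ends assms by simp
  next
    case 2
    then show ?thesis using ends edge[of 0] by (auto intro: path_le3_edge)
  next
    case 3
    then show ?thesis using ends edge[of 0] edge[of 1] \<open>distinct vs\<close> by (auto intro: path_le3_via)
  next
    case 4
    then show ?thesis using ends edge[of 0] edge[of 1] edge[of 2] \<open>distinct vs\<close>
      by (auto intro: path_le3_via2)
  qed
next
  assume "path_le3 F s t"
  then obtain vs where "is_path F s t vs" "length vs \<le> 4"
  proof (cases rule: path_le3_cases)
    case edge
    then show ?thesis using assms that[of "[s,t]"] by (simp add: is_path_def less_Suc_eq)
  next
    case (via x)
    then show ?thesis using assms that[of "[s,x,t]"]
      by (simp add: is_path_def less_Suc_eq nth_Cons split: nat.split)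
  next
    case (via2 x y)
    then show ?thesis using assms that[of "[s,x,y,t]"]
      by (simp add: is_path_def less_Suc_eq nth_Cons split: nat.split)
  qed
  then show "pathset 3 F s t"
    unfolding pathset_def by fastforce
qed

lemma Nid_3_commute: "s \<noteq> t \<Longrightarrow> Nid 3 i E s t = Nid 3 i E t s"
  unfolding Nid_def by (simp add: pathset_3_iff_path_le3 path_le3_commute)

lemma stronger_3_commute:
  "s \<noteq> t \<Longrightarrow> s' \<noteq> t' \<Longrightarrow> stronger 3 m E' t' s' E t s \<longleftrightarrow> stronger 3 m E' s' t' E s t"
  unfolding stronger_def by (simp add: Nid_3_commute)

lemma irrelevant_3_iff:
  "s \<noteq> t \<Longrightarrow> irrelevant 3 E s t e \<longleftrightarrow>
    (\<forall>F. F \<subseteq> E \<and> e \<in> F \<and> path_le3 F s t \<longrightarrow> path_le3 (F - {e}) s t)"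
  unfolding irrelevant_def by (simp add: pathset_3_iff_path_le3)

lemma not_irrelevant_3I:
  assumes "s \<noteq> t" "F \<subseteq> E" "e \<in> F" "path_le3 F s t" "\<not> path_le3 (F - {e}) s t"
  shows "\<not> irrelevant 3 E s t e"
  using assms irrelevant_3_iff by blast

lemma pathset_mono: "pathset d F s t \<Longrightarrow> F \<subseteq> G \<Longrightarrow> pathset d G s t"
  unfolding pathset_def is_path_def by blast

lemma pathset_nonempty:
  assumes "pathset d F s t" "s \<noteq> t"
  shows "F \<noteq> {}"
proof -
  obtain vs where vs: "is_path F s t vs"
    using assms(1) unfolding pathset_def by blast
  then have "length vs \<noteq> 1"
    using assms(2) unfolding is_path_def by (auto simp: length_Suc_conv)
  then have "Suc 0 < length vs"
    using vs unfolding is_path_def by (cases vs) auto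
  then show ?thesis
    using vs unfolding is_path_def by blast
qed

lemma Nid_le_if_inj_on:
  assumes "finite E'"
    and maps: "\<And>F. F \<subseteq> E \<Longrightarrow> pathset d F s t \<Longrightarrow>
      \<Phi> F \<subseteq> E' \<and> card (\<Phi> F) = card F \<and> pathset d (\<Phi> F) s t"
    and inj: "inj_on \<Phi> {F. F \<subseteq> E \<and> pathset d F s t}"
  shows "Nid d i E s t \<le> Nid d i E' s t"
  unfolding Nid_def
proof (rule card_inj_on_le)
  show "inj_on \<Phi> {F. F \<subseteq> E \<and> card F = i \<and> pathset d F s t}"
    using inj by (rule inj_on_subset) blast
  show "\<Phi> ` {F. F \<subseteq> E \<and> card F = i \<and> pathset d F s t} \<subseteq> {F. F \<subseteq> E' \<and> card F = i \<and> pathset d F s t}"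
    using maps by auto
  show "finite {F. F \<subseteq> E' \<and> card F = i \<and> pathset d F s t}"
    using \<open>finite E'\<close> by (rule rev_finite_subset[OF finite_Pow_iff[THEN iffD2]]) blast
qed

lemma Nid_less_if_inj_on:
  assumes "finite E'"
    and maps: "\<And>F. F \<subseteq> E \<Longrightarrow> pathset d F s t \<Longrightarrow>
      \<Phi> F \<subseteq> E' \<and> card (\<Phi> F) = card F \<and> pathset d (\<Phi> F) s t"
    and inj: "inj_on \<Phi> {F. F \<subseteq> E \<and> pathset d F s t}"
    and Z: "Z \<subseteq> E'" "pathset d Z s t" "Z \<notin> \<Phi> ` {F. F \<subseteq> E \<and> pathset d F s t}"
  shows "Nid d (card Z) E s t < Nid d (card Z) E' s t"
proof -
  define A where "A = {F. F \<subseteq> E \<and> card F = card Z \<and> pathset d F s t}"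
  define B where "B = {F. F \<subseteq> E' \<and> card F = card Z \<and> pathset d F s t}"
  have "finite B"
    unfolding B_def using \<open>finite E'\<close> by (rule rev_finite_subset[OF finite_Pow_iff[THEN iffD2]]) blast
  have "card A \<le> card (B - {Z})"
  proof (rule card_inj_on_le)
    show "inj_on \<Phi> A"
      using inj unfolding A_def by (rule inj_on_subset) blast
    show "\<Phi> ` A \<subseteq> B - {Z}"
      using maps Z(3) unfolding A_def B_def by auto
  qed (use \<open>finite B\<close> in simp)
  also have "\<dots> < card B"
    using \<open>finite B\<close> Z(1,2) unfolding B_def by (intro card_Diff1_less) auto
  finally show ?thesis
    unfolding Nid_def A_def B_def .
qed

lemma stronger_if_inj_on:
  assumes "finite E'" "card E' = m" "s \<noteq> t"
    and maps: "\<And>F. F \<subseteq> E \<Longrightarrow> pathset d F s t \<Longrightarrow>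
      \<Phi> F \<subseteq> E' \<and> card (\<Phi> F) = card F \<and> pathset d (\<Phi> F) s t"
    and inj: "inj_on \<Phi> {F. F \<subseteq> E \<and> pathset d F s t}"
    and Z: "Z \<subseteq> E'" "pathset d Z s t" "Z \<notin> \<Phi> ` {F. F \<subseteq> E \<and> pathset d F s t}"
  shows "stronger d m E' s t E s t"
proof -
  have "finite Z"
    using Z(1) \<open>finite E'\<close> by (rule finite_subset)
  moreover have "Z \<noteq> {}"
    using Z(2) \<open>s \<noteq> t\<close> by (rule pathset_nonempty)
  moreover have "card Z \<le> m"
    using card_mono[OF \<open>finite E'\<close> Z(1)] \<open>card E' = m\<close> by simp
  ultimately have "card Z \<in> {1..m}"
    by (simp add: Suc_le_eq card_gt_0_iff)
  then show ?thesis
    unfolding stronger_def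
    using Nid_le_if_inj_on[OF \<open>finite E'\<close> maps inj] Nid_less_if_inj_on[OF \<open>finite E'\<close> maps inj Z]
    by blast
qed

lemma stronger_le_trans:
  assumes "stronger d m E2 s2 t2 E1 s1 t1" "\<forall>i\<in>{1..m}. Nid d i E s t \<le> Nid d i E1 s1 t1"
  shows "stronger d m E2 s2 t2 E s t"
  using assms unfolding stronger_def by (meson le_less_trans order_trans)

lemma stronger_trans:
  assumes "stronger d m E2 s2 t2 E1 s1 t1" "stronger d m E1 s1 t1 E s t"
  shows "stronger d m E2 s2 t2 E s t"
  by (rule stronger_le_trans[OF assms(1)]) (use assms(2) in \<open>simp add: stronger_def\<close>)

lemma tt_graph_terminalsD: "tt_graph n m E s t \<Longrightarrow> s \<noteq> t \<and> s < n \<and> t < n"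
  by (simp add: tt_graph_def)

lemma tt_graph_card: "tt_graph n m E s t \<Longrightarrow> card E = m"
  by (simp add: tt_graph_def)

lemma tt_graph_commute: "tt_graph n m E s t \<Longrightarrow> tt_graph n m E t s"
  unfolding tt_graph_def by auto

lemma tt_graph_edgeD: "tt_graph n m E s t \<Longrightarrow> {x,y} \<in> E \<Longrightarrow> x \<noteq> y \<and> x < n \<and> y < n"
  unfolding tt_graph_def by (auto simp: doubleton_eq_iff)

lemma tt_graph_edgeE:
  assumes "tt_graph n m E s t" "e \<in> E"
  obtains x y where "e = {x,y}" "x \<noteq> y" "x < n" "y < n"
  using assms unfolding tt_graph_def by auto

lemma tt_graph_finite: "tt_graph n m E s t \<Longrightarrow> finite E"
  unfolding tt_graph_def by (rule rev_finite_subset[OF finite_Pow_iff[THEN iffD2, of "{..<n}"]]) auto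

definition pathset_count :: "nat \<Rightarrow> nat \<Rightarrow> nat set set \<Rightarrow> nat \<Rightarrow> nat \<Rightarrow> nat" where
  "pathset_count d m E s t = (\<Sum>i=1..m. Nid d i E s t)"

lemma pathset_count_less:
  "stronger d m E' s' t' E s t \<Longrightarrow> pathset_count d m E s t < pathset_count d m E' s' t'"
  unfolding pathset_count_def stronger_def by (intro sum_strict_mono_ex1) auto

lemma Nid_le_two_power: "finite E \<Longrightarrow> Nid d i E s t \<le> 2 ^ card E"
  unfolding Nid_def by (rule order_trans[OF card_mono[of "Pow E"]]) (auto simp: card_Pow)

lemma pathset_count_le: "finite E \<Longrightarrow> pathset_count d m E s t \<le> m * 2 ^ card E"
  unfolding pathset_count_def using sum_bounded_above[of "{1..m}" "\<lambda>i. Nid d i E s t"] Nid_le_two_power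
  by fastforce

lemma exists_stronger_satisfying_if_improvable:
  fixes Q :: "nat set set \<Rightarrow> bool"
  assumes improve: "\<And>E. tt_graph n m E s t \<Longrightarrow> \<not> Q E \<Longrightarrow> \<exists>E'. tt_graph n m E' s t \<and> stronger d m E' s t E s t"
  shows "tt_graph n m E s t \<Longrightarrow> \<not> Q E \<Longrightarrow> \<exists>E'. tt_graph n m E' s t \<and> Q E' \<and> stronger d m E' s t E s t"
proof (induction "m * 2 ^ m - pathset_count d m E s t" arbitrary: E rule: less_induct)
  case less
  obtain E1 where E1: "tt_graph n m E1 s t" "stronger d m E1 s t E s t"
    using improve less.prems by blast
  show ?case
  proof (cases "Q E1")
    case True
    then show ?thesis
      using E1 by blast
  next
    case False
    have "pathset_count d m E s t < pathset_count d m E1 s t"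
      using E1(2) by (rule pathset_count_less)
    moreover have "pathset_count d m E1 s t \<le> m * 2 ^ m"
      using pathset_count_le[OF tt_graph_finite[OF E1(1)]] tt_graph_card[OF E1(1)] by simp
    ultimately have "m * 2 ^ m - pathset_count d m E1 s t < m * 2 ^ m - pathset_count d m E s t"
      by linarith
    then obtain E' where "tt_graph n m E' s t" "Q E'" "stronger d m E' s t E1 s t"
      using less.hyps E1(1) False by blast
    then show ?thesis
      using stronger_trans E1(2) by blast
  qed
qed

definition swap_edge :: "nat set \<Rightarrow> nat set \<Rightarrow> nat set set \<Rightarrow> nat set set" where
  "swap_edge e f F = (if e \<in> F then insert f (F - {e}) else F)"

lemma swap_edge_mono: "F \<subseteq> E \<Longrightarrow> swap_edge e f F \<subseteq> swap_edge e f E"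
  unfolding swap_edge_def by auto

lemma card_swap_edge: "finite F \<Longrightarrow> f \<notin> F \<Longrightarrow> card (swap_edge e f F) = card F"
  unfolding swap_edge_def by (auto intro!: Suc_pred simp: card_gt_0_iff)

lemma inj_on_swap_edge: "f \<notin> E \<Longrightarrow> inj_on (swap_edge e f) (Pow E)"
  unfolding swap_edge_def inj_on_def by (smt (verit) Diff_iff PowD insert_Diff insert_ident insert_iff subsetD)

lemma tt_graph_swap_edge:
  assumes "tt_graph n m E s t" "{x,y} \<notin> E" "x \<noteq> y" "x < n" "y < n"
  shows "tt_graph n m (swap_edge e {x,y} E) s t"
  using assms card_swap_edge[OF tt_graph_finite[OF assms(1)] assms(2), of e]
  unfolding tt_graph_def swap_edge_def by auto

lemma swap_edge_maps_pathset:
  assumes "finite E" "f \<notin> E"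
    and preserves: "\<And>F. F \<subseteq> E \<Longrightarrow> e \<in> F \<Longrightarrow> pathset d F s t \<Longrightarrow> pathset d (insert f (F - {e})) s t"
    and "F \<subseteq> E" "pathset d F s t"
  shows "swap_edge e f F \<subseteq> swap_edge e f E \<and> card (swap_edge e f F) = card F \<and>
    pathset d (swap_edge e f F) s t"
proof -
  have "finite F" "f \<notin> F"
    using assms(1,2,4) finite_subset by auto
  then show ?thesis
    using swap_edge_mono[OF \<open>F \<subseteq> E\<close>] card_swap_edge preserves[OF \<open>F \<subseteq> E\<close>] \<open>pathset d F s t\<close>
    unfolding swap_edge_def by auto
qed

lemma Nid_le_swap_edge:
  assumes "finite E" "f \<notin> E"
    and preserves: "\<And>F. F \<subseteq> E \<Longrightarrow> e \<in> F \<Longrightarrow> pathset d F s t \<Longrightarrow> pathset d (insert f (F - {e})) s t"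
  shows "Nid d i E s t \<le> Nid d i (swap_edge e f E) s t"
proof (rule Nid_le_if_inj_on)
  show "finite (swap_edge e f E)"
    using \<open>finite E\<close> unfolding swap_edge_def by simp
  show "inj_on (swap_edge e f) {F. F \<subseteq> E \<and> pathset d F s t}"
    using inj_on_swap_edge[OF \<open>f \<notin> E\<close>] by (rule inj_on_subset) auto
qed (rule swap_edge_maps_pathset[OF assms])

lemma stronger_swap_edge:
  assumes "finite E" "e \<in> E" "f \<notin> E" "s \<noteq> t"
    and preserves: "\<And>F. F \<subseteq> E \<Longrightarrow> e \<in> F \<Longrightarrow> pathset d F s t \<Longrightarrow> pathset d (insert f (F - {e})) s t"
    and P: "P \<subseteq> E - {e}" "\<not> pathset d (insert e P) s t" "pathset d (insert f P) s t"
  shows "stronger d (card E) (swap_edge e f E) s t E s t"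
proof (rule stronger_if_inj_on[where \<Phi>="swap_edge e f" and Z="insert f P"])
  show "finite (swap_edge e f E)"
    using \<open>finite E\<close> unfolding swap_edge_def by simp
  show "card (swap_edge e f E) = card E"
    using \<open>finite E\<close> \<open>f \<notin> E\<close> by (rule card_swap_edge)
  show "inj_on (swap_edge e f) {F. F \<subseteq> E \<and> pathset d F s t}"
    using inj_on_swap_edge[OF \<open>f \<notin> E\<close>] by (rule inj_on_subset) auto
  show "insert f P \<subseteq> swap_edge e f E"
    using P(1) \<open>e \<in> E\<close> unfolding swap_edge_def by auto
  show "insert f P \<notin> swap_edge e f ` {F. F \<subseteq> E \<and> pathset d F s t}"
  proof
    assume "insert f P \<in> swap_edge e f ` {F. F \<subseteq> E \<and> pathset d F s t}"
    then obtain F where "F \<in> {F. F \<subseteq> E \<and> pathset d F s t}" "insert f P = swap_edge e f F"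
      by (rule imageE)
    then have F: "F \<subseteq> E" "pathset d F s t" "swap_edge e f F = insert f P"
      by simp_all
    have "f \<notin> F - {e}" "f \<notin> P"
      using F(1) P(1) \<open>f \<notin> E\<close> by auto
    have "e \<in> F"
    proof (rule ccontr)
      assume "e \<notin> F"
      then have "F = insert f P"
        using F(3) by (simp add: swap_edge_def)
      then show False
        using \<open>f \<notin> F - {e}\<close> \<open>e \<notin> F\<close> by blast
    qed
    then have "insert f (F - {e}) = insert f P"
      using F(3) by (simp add: swap_edge_def)
    then have "F - {e} = P"
      using insert_ident[OF \<open>f \<notin> F - {e}\<close> \<open>f \<notin> P\<close>] by blast
    then have "F = insert e P"
      using \<open>e \<in> F\<close> by blast
    then show False
      using F(2) P(2) by simp
  qed
  show "swap_edge e f F \<subseteq> swap_edge e f E \<and> card (swap_edge e f F) = card F \<and>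
      pathset d (swap_edge e f F) s t" if "F \<subseteq> E" "pathset d F s t" for F
    using swap_edge_maps_pathset[OF assms(1,3) preserves that] .
qed (fact assms(4) P(3))+

lemma Nid_le_swap_irrelevant_edge:
  assumes "finite E" "f \<notin> E" "irrelevant d E s t e"
  shows "Nid d i E s t \<le> Nid d i (swap_edge e f E) s t"
  using assms(3) by (intro Nid_le_swap_edge[OF assms(1,2)]) (auto simp: irrelevant_def intro: pathset_mono)

lemma exists_stronger_swap_edge:
  assumes tt: "tt_graph n m E s t" and "e \<in> E" "{x,y} \<notin> E" "x \<noteq> y" "x < n" "y < n"
    and preserves: "\<And>F. F \<subseteq> E \<Longrightarrow> e \<in> F \<Longrightarrow> path_le3 F s t \<Longrightarrow> path_le3 (insert {x,y} (F - {e})) s t"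
    and P: "P \<subseteq> E - {e}" "\<not> path_le3 (insert e P) s t" "path_le3 (insert {x,y} P) s t"
  shows "\<exists>E'. tt_graph n m E' s t \<and> stronger 3 m E' s t E s t"
proof -
  have "s \<noteq> t" "card E = m"
    using tt_graph_terminalsD[OF tt] tt_graph_card[OF tt] by auto
  have "stronger 3 (card E) (swap_edge e {x,y} E) s t E s t"
    by (rule stronger_swap_edge[OF tt_graph_finite[OF tt] \<open>e \<in> E\<close> \<open>{x,y} \<notin> E\<close> \<open>s \<noteq> t\<close> _ P(1)])
      (use preserves P(2,3) in \<open>simp_all add: pathset_3_iff_path_le3[OF \<open>s \<noteq> t\<close>]\<close>)
  then show ?thesis
    using \<open>card E = m\<close> tt_graph_swap_edge[OF tt \<open>{x,y} \<notin> E\<close> \<open>x \<noteq> y\<close> \<open>x < n\<close> \<open>y < n\<close>] by blast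
qed

lemma exists_stronger_swap_irrelevant_edge:
  assumes tt: "tt_graph n m E s t" and "e \<in> E" "{x,y} \<notin> E" "x \<noteq> y" "x < n" "y < n"
    and irr: "irrelevant 3 E s t e"
    and P: "P \<subseteq> E - {e}" "\<not> path_le3 P s t" "path_le3 (insert {x,y} P) s t"
  shows "\<exists>E'. tt_graph n m E' s t \<and> stronger 3 m E' s t E s t"
proof (rule exists_stronger_swap_edge[OF tt \<open>e \<in> E\<close> \<open>{x,y} \<notin> E\<close> \<open>x \<noteq> y\<close> \<open>x < n\<close> \<open>y < n\<close> _ P(1) _ P(3)])
  have "s \<noteq> t"
    using tt_graph_terminalsD[OF tt] by blast
  then have irr3: "\<And>F. F \<subseteq> E \<Longrightarrow> e \<in> F \<Longrightarrow> path_le3 F s t \<Longrightarrow> path_le3 (F - {e}) s t"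
    using irr irrelevant_3_iff by blast
  show "path_le3 (insert {x,y} (F - {e})) s t" if "F \<subseteq> E" "e \<in> F" "path_le3 F s t" for F
    using irr3[OF that] by (rule path_le3_mono) blast
  show "\<not> path_le3 (insert e P) s t"
  proof
    assume "path_le3 (insert e P) s t"
    moreover have "insert e P - {e} = P"
      using P(1) by auto
    ultimately show False
      using irr3[of "insert e P"] P(1,2) \<open>e \<in> E\<close> by auto
  qed
qed

lemma exists_stronger_if_terminals_nonadjacent:
  assumes tt: "tt_graph n m E s t" and "m \<noteq> 0" "{s,t} \<notin> E"
  shows "\<exists>E'. tt_graph n m E' s t \<and> stronger 3 m E' s t E s t"
proof -
  have "s \<noteq> t" "s < n" "t < n" "card E = m"
    using tt_graph_terminalsD[OF tt] tt_graph_card[OF tt] by auto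
  then obtain e where "e \<in> E"
    using \<open>m \<noteq> 0\<close> by fastforce
  then have "\<not> path_le3 {e} s t"
    using \<open>{s,t} \<notin> E\<close> \<open>s \<noteq> t\<close> unfolding path_le3_def by (auto simp: doubleton_eq_iff)
  then show ?thesis
    by (intro exists_stronger_swap_edge[OF tt \<open>e \<in> E\<close> \<open>{s,t} \<notin> E\<close> \<open>s \<noteq> t\<close> \<open>s < n\<close> \<open>t < n\<close>, of "{}"])
      (auto intro: path_le3_edge)
qed

lemma exists_stronger_if_private_neighbour_bridge:
  assumes tt: "tt_graph n m E s t" and sv: "{s,v} \<in> E" "{t,v} \<notin> E" "v \<noteq> t"
    and bridge: "{v,b} \<in> E" "{b,t} \<in> E" "b \<noteq> s"
  shows "\<exists>E'. tt_graph n m E' s t \<and> stronger 3 m E' s t E s t"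
proof -
  have "s \<noteq> t" "t < n" "v \<noteq> s" "v < n" "b \<noteq> t"
    using tt_graph_terminalsD[OF tt] tt_graph_edgeD[OF tt sv(1)] tt_graph_edgeD[OF tt bridge(2)] by auto
  have vt: "{v,t} \<notin> E"
    using sv(2) by (simp add: insert_commute)
  show ?thesis
  proof (rule exists_stronger_swap_edge[OF tt \<open>{v,b} \<in> E\<close> vt \<open>v \<noteq> t\<close> \<open>v < n\<close> \<open>t < n\<close>, of "{{s,v}}"])
    fix F assume F: "F \<subseteq> E" "{v,b} \<in> F" "path_le3 F s t"
    let ?G = "insert {v,t} (F - {{v,b}})"
    have kept: "u \<in> ?G" if "u \<in> F" "s \<in> u \<or> t \<in> u" for u
      using that \<open>v \<noteq> s\<close> \<open>b \<noteq> s\<close> \<open>v \<noteq> t\<close> \<open>b \<noteq> t\<close> by auto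
    from F(3) show "path_le3 ?G s t"
    proof (cases rule: path_le3_cases)
      case edge
      then show ?thesis using kept by (simp add: path_le3_edge)
    next
      case (via x)
      then show ?thesis using kept by (intro path_le3_via[of x]) auto
    next
      case (via2 x y)
      show ?thesis
      proof (cases "{x,y} = {v,b}")
        case True
        then have "x = v"
          using via2(8) F(1) vt by (auto simp: doubleton_eq_iff insert_commute)
        then show ?thesis
          using kept via2 by (intro path_le3_via[of v]) auto
      next
        case False
        then show ?thesis
          using kept via2 by (intro path_le3_via2[of x _ _ y]) auto
      qed
    qed
  next
    show "\<not> path_le3 (insert {v,b} {{s,v}}) s t"
      using \<open>s \<noteq> t\<close> \<open>v \<noteq> t\<close> \<open>b \<noteq> t\<close> by (intro not_path_le3_if_isolated) auto
    show "path_le3 (insert {v,t} {{s,v}}) s t"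
      using \<open>v \<noteq> s\<close> \<open>v \<noteq> t\<close> by (intro path_le3_via[of v]) auto
  qed (use sv(1) \<open>b \<noteq> s\<close> in \<open>auto simp: doubleton_eq_iff\<close>)
qed

lemma irrelevant_private_edge:
  assumes tt: "tt_graph n m E s t" and sv: "{s,v} \<in> E" "{t,v} \<notin> E" "v \<noteq> t"
    and no_bridge: "\<And>b. {v,b} \<in> E \<Longrightarrow> {b,t} \<in> E \<Longrightarrow> b = s"
  shows "irrelevant 3 E s t {s,v}"
proof -
  have "s \<noteq> t"
    using tt_graph_terminalsD[OF tt] by blast
  have "path_le3 (F - {{s,v}}) s t" if F: "F \<subseteq> E" "path_le3 F s t" for F
    using F(2)
  proof (cases rule: path_le3_cases)
    case edge
    then show ?thesis using \<open>v \<noteq> t\<close> by (intro path_le3_edge) (auto simp: doubleton_eq_iff)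
  next
    case (via x)
    have "x \<noteq> v"
      using via(4) F(1) sv(2) by (auto simp: insert_commute)
    then show ?thesis
      using via \<open>s \<noteq> t\<close> \<open>v \<noteq> t\<close> by (intro path_le3_via[of x]) (auto simp: doubleton_eq_iff)
  next
    case (via2 x y)
    have "x \<noteq> v"
    proof
      assume "x = v"
      then have "{v,y} \<in> E" "{y,t} \<in> E"
        using via2(7,8) F(1) by auto
      then show False
        using no_bridge via2(3) by blast
    qed
    then show ?thesis
      using via2 \<open>s \<noteq> t\<close> \<open>v \<noteq> t\<close> by (intro path_le3_via2[of x _ _ y]) (auto simp: doubleton_eq_iff)
  qed
  then show ?thesis
    by (simp add: irrelevant_3_iff[OF \<open>s \<noteq> t\<close>])
qed

definition path_through :: "nat set set \<Rightarrow> nat \<Rightarrow> nat \<Rightarrow> nat \<Rightarrow> nat \<Rightarrow> bool" where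
  "path_through Y s t c1 c2 \<longleftrightarrow> ({s,c1} \<in> Y \<and> {c2,t} \<in> Y) \<or> ({s,c2} \<in> Y \<and> {c1,t} \<in> Y)"

locale pendant_swap =
  fixes E :: "nat set set" and s t v c1 c2 :: nat
  assumes finite_E: "finite E"
    and c_edge: "{c1,c2} \<in> E"
    and pendant_edge: "{s,v} \<in> E"
    and pendant: "\<And>e. e \<in> E \<Longrightarrow> v \<in> e \<Longrightarrow> e = {s,v}"
    and distinct: "distinct [s,t,v,c1,c2]"
begin

lemma t_v_notin_E: "{t,v} \<notin> E"
  using pendant[of "{t,v}"] distinct by (auto simp: doubleton_eq_iff)

definition residue :: "nat set set \<Rightarrow> nat set set" where
  "residue F = F - {{c1,c2},{s,v}}"

lemma path_le3_without_swapped_edges: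
  assumes "F \<subseteq> E" "path_le3 F s t"
  shows "path_le3 (residue F) s t \<or> path_through (residue F) s t c1 c2"
  using assms(2)
proof (cases rule: path_le3_cases)
  case edge
  then show ?thesis
    using distinct by (intro disjI1 path_le3_edge) (auto simp: residue_def doubleton_eq_iff)
next
  case (via x)
  have "x \<noteq> v"
    using via(4) assms(1) t_v_notin_E by (auto simp: insert_commute)
  then show ?thesis
    using via distinct by (intro disjI1 path_le3_via[of x]) (auto simp: residue_def doubleton_eq_iff)
next
  case (via2 x y)
  have "x \<noteq> v"
  proof
    assume "x = v"
    then have "{v,y} = {s,v}"
      using via2(7) assms(1) pendant by auto
    then show False
      using via2(3) by (auto simp: residue_def doubleton_eq_iff)
  qed
  show ?thesis
  proof (cases "{x,y} = {c1,c2}")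
    case True
    then show ?thesis
      using via2 \<open>x \<noteq> v\<close> distinct unfolding path_through_def residue_def by (auto simp: doubleton_eq_iff)
  next
    case False
    then show ?thesis
      using via2 \<open>x \<noteq> v\<close> distinct by (intro disjI1 path_le3_via2[of x _ _ y]) (auto simp: residue_def doubleton_eq_iff)
  qed
qed

definition last_edge :: "nat set set \<Rightarrow> nat set" where
  "last_edge F = (if {s,c1} \<in> F then {c2,t} else {c1,t})"

lemma s_c1_in_residue_iff: "{s,c1} \<in> residue F \<longleftrightarrow> {s,c1} \<in> F"
  using distinct unfolding residue_def by (auto simp: doubleton_eq_iff)

lemma last_edge_of_path_through:
  assumes "F \<subseteq> E" "path_le3 F s t" "\<not> path_le3 (residue F) s t"
  shows "last_edge F \<in> residue F" "\<not> path_through (residue F - {last_edge F}) s t c1 c2"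
proof -
  have through: "path_through (residue F) s t c1 c2"
    using path_le3_without_swapped_edges[OF assms(1,2)] assms(3) by blast
  have "last_edge F \<in> residue F \<and> \<not> path_through (residue F - {last_edge F}) s t c1 c2"
  proof (cases "{s,c1} \<in> F")
    case True
    then have "{s,c1} \<in> residue F"
      by (simp add: s_c1_in_residue_iff)
    then have "{c1,t} \<notin> residue F"
      using assms(3) path_le3_via[of c1 s t "residue F"] distinct by auto
    then show ?thesis
      using through True unfolding last_edge_def path_through_def by simp
  next
    case False
    then have "{s,c1} \<notin> residue F"
      by (simp add: s_c1_in_residue_iff)
    then show ?thesis
      using through False unfolding last_edge_def path_through_def by simp
  qed
  then show "last_edge F \<in> residue F" "\<not> path_through (residue F - {last_edge F}) s t c1 c2"
    by simp_all
qed

text \<open>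
  Only pathsets whose short paths all use \<open>{c1,c2}\<close> are hurt by the swap; they lack \<open>{s,v}\<close>,
  so trading also the last edge of such a path for \<open>{s,v}\<close> reroutes it along \<open>s, v, t\<close>.
  The two kinds of images are told apart by whether their part outside \<open>{s,v}, {t,v}\<close> still
  has a short path or a path through \<open>{c1,c2}\<close>.
\<close>

definition swap_map :: "nat set set \<Rightarrow> nat set set" where
  "swap_map F =
    (if {c1,c2} \<notin> F then F
     else if path_le3 (residue F) s t \<or> {s,v} \<in> F then insert {t,v} (F - {{c1,c2}})
     else insert {s,v} (insert {t,v} (F - {{c1,c2}, last_edge F})))"

lemma path_le3_pendant_detour: "path_le3 (insert {s,v} (insert {t,v} X)) s t"
  using distinct by (intro path_le3_via[of v]) (auto simp: insert_commute)

lemma swap_map_pathset: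
  assumes "F \<subseteq> E" "path_le3 F s t"
  shows "swap_map F \<subseteq> swap_edge {c1,c2} {t,v} E \<and> card (swap_map F) = card F \<and>
    path_le3 (swap_map F) s t"
proof -
  have "finite F" "{t,v} \<notin> F"
    using assms(1) finite_E t_v_notin_E finite_subset by auto
  consider (keep) "{c1,c2} \<notin> F"
    | (direct) "{c1,c2} \<in> F" "path_le3 (residue F) s t \<or> {s,v} \<in> F"
    | (detour) "{c1,c2} \<in> F" "\<not> path_le3 (residue F) s t" "{s,v} \<notin> F"
    by blast
  then show ?thesis
  proof cases
    case keep
    then show ?thesis
      using assms c_edge unfolding swap_map_def swap_edge_def by auto
  next
    case direct
    then have eq: "swap_map F = swap_edge {c1,c2} {t,v} F"
      unfolding swap_map_def swap_edge_def by simp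
    have "path_le3 (insert {t,v} (F - {{c1,c2}})) s t"
    proof (cases "path_le3 (residue F) s t")
      case True
      then show ?thesis
        by (rule path_le3_mono) (auto simp: residue_def)
    next
      case False
      then have "{s,v} \<in> insert {t,v} (F - {{c1,c2}})"
        using direct distinct by (auto simp: doubleton_eq_iff)
      then show ?thesis
        using path_le3_pendant_detour[of "F - {{c1,c2}}"] by (simp add: insert_absorb)
    qed
    then show ?thesis
      using swap_edge_mono[OF assms(1), of "{c1,c2}" "{t,v}"]
        card_swap_edge[OF \<open>finite F\<close> \<open>{t,v} \<notin> F\<close>, of "{c1,c2}"] direct(1)
      unfolding eq by (simp add: swap_edge_def)
  next
    case detour
    let ?l = "last_edge F"
    have "?l \<in> F" "?l \<noteq> {c1,c2}"
      using last_edge_of_path_through(1)[OF assms detour(2)] unfolding residue_def by auto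
    have eq: "swap_map F = insert {s,v} (insert {t,v} (F - {{c1,c2}, ?l}))"
      using detour unfolding swap_map_def by simp
    have "card {{c1,c2}, ?l} = 2"
      using \<open>?l \<noteq> {c1,c2}\<close> by simp
    then have "card (F - {{c1,c2}, ?l}) + 2 = card F"
      using card_Diff_subset[of "{{c1,c2}, ?l}" F] card_mono[OF \<open>finite F\<close>, of "{{c1,c2}, ?l}"]
        \<open>?l \<in> F\<close> detour(1) by auto
    moreover have "{s,v} \<noteq> {t,v}"
      using distinct by (auto simp: doubleton_eq_iff)
    ultimately have "card (swap_map F) = card F"
      unfolding eq using \<open>finite F\<close> \<open>{t,v} \<notin> F\<close> detour(3) by simp
    moreover have "swap_map F \<subseteq> swap_edge {c1,c2} {t,v} E"
      unfolding eq swap_edge_def using assms(1) c_edge pendant_edge distinct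
      by (auto simp: doubleton_eq_iff)
    ultimately show ?thesis
      unfolding eq using path_le3_pendant_detour by simp
  qed
qed

lemma swap_map_minus_detour:
  assumes "F \<subseteq> E" "{c1,c2} \<in> F"
  shows "swap_map F - {{s,v},{t,v}} =
    (if path_le3 (residue F) s t \<or> {s,v} \<in> F then residue F else residue F - {last_edge F})"
  using assms t_v_notin_E unfolding swap_map_def residue_def by auto

lemma swap_map_direct_iff:
  assumes "F \<subseteq> E" "path_le3 F s t" "{c1,c2} \<in> F"
  shows "path_le3 (swap_map F - {{s,v},{t,v}}) s t \<or> path_through (swap_map F - {{s,v},{t,v}}) s t c1 c2
    \<longleftrightarrow> path_le3 (residue F) s t \<or> {s,v} \<in> F"
proof (cases "path_le3 (residue F) s t \<or> {s,v} \<in> F")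
  case True
  then show ?thesis
    using path_le3_without_swapped_edges[OF assms(1,2)] swap_map_minus_detour[OF assms(1,3)] by simp
next
  case False
  then have "\<not> path_le3 (residue F - {last_edge F}) s t"
    using path_le3_mono[of "residue F - {last_edge F}" s t "residue F"] by blast
  then show ?thesis
    using False last_edge_of_path_through(2)[OF assms(1,2)] swap_map_minus_detour[OF assms(1,3)]
    by simp
qed

lemma t_v_in_swap_map_iff: "F \<subseteq> E \<Longrightarrow> {t,v} \<in> swap_map F \<longleftrightarrow> {c1,c2} \<in> F"
  using t_v_notin_E unfolding swap_map_def by auto

lemma inj_on_swap_map: "inj_on swap_map {F. F \<subseteq> E \<and> path_le3 F s t}"
proof (rule inj_onI)
  fix F G
  assume "F \<in> {F. F \<subseteq> E \<and> path_le3 F s t}" "G \<in> {F. F \<subseteq> E \<and> path_le3 F s t}"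
  then have F: "F \<subseteq> E" "path_le3 F s t" and G: "G \<subseteq> E" "path_le3 G s t"
    by simp_all
  assume eq: "swap_map F = swap_map G"
  then have c_iff: "{c1,c2} \<in> F \<longleftrightarrow> {c1,c2} \<in> G"
    using t_v_in_swap_map_iff[OF F(1)] t_v_in_swap_map_iff[OF G(1)] by simp
  have "{t,v} \<notin> F" "{t,v} \<notin> G"
    using F(1) G(1) t_v_notin_E by auto
  show "F = G"
  proof (cases "{c1,c2} \<in> F")
    case False
    then show ?thesis
      using eq c_iff unfolding swap_map_def by simp
  next
    case True
    then have "{c1,c2} \<in> G"
      using c_iff by simp
    have direct_iff: "path_le3 (residue F) s t \<or> {s,v} \<in> F \<longleftrightarrow> path_le3 (residue G) s t \<or> {s,v} \<in> G"
      using swap_map_direct_iff[OF F True] swap_map_direct_iff[OF G \<open>{c1,c2} \<in> G\<close>] eq by simp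
    show ?thesis
    proof (cases "path_le3 (residue F) s t \<or> {s,v} \<in> F")
      case True
      then have "insert {t,v} (F - {{c1,c2}}) = insert {t,v} (G - {{c1,c2}})"
        using eq direct_iff \<open>{c1,c2} \<in> F\<close> \<open>{c1,c2} \<in> G\<close> unfolding swap_map_def by simp
      then have "F - {{c1,c2}} = G - {{c1,c2}}"
        using \<open>{t,v} \<notin> F\<close> \<open>{t,v} \<notin> G\<close> by (simp add: insert_ident)
      then show ?thesis
        using \<open>{c1,c2} \<in> F\<close> \<open>{c1,c2} \<in> G\<close> by (metis insert_Diff)
    next
      case False
      then have rest: "residue F - {last_edge F} = residue G - {last_edge G}"
        using eq direct_iff swap_map_minus_detour[OF F(1) \<open>{c1,c2} \<in> F\<close>]
          swap_map_minus_detour[OF G(1) \<open>{c1,c2} \<in> G\<close>] by simp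
      have s_c1: "{s,c1} \<in> H \<longleftrightarrow> {s,c1} \<in> residue H - {last_edge H}" for H
        using distinct s_c1_in_residue_iff unfolding last_edge_def by (auto simp: doubleton_eq_iff)
      have "{s,c1} \<in> F \<longleftrightarrow> {s,c1} \<in> G"
        using s_c1[of F] s_c1[of G] rest by simp
      then have "last_edge F = last_edge G"
        unfolding last_edge_def by simp
      moreover have "last_edge F \<in> residue F" "last_edge G \<in> residue G"
        using last_edge_of_path_through(1) F G False direct_iff by simp_all
      ultimately have "residue F = residue G"
        using rest by (metis insert_Diff)
      moreover have "F = insert {c1,c2} (residue F)" "G = insert {c1,c2} (residue G)"
        using False direct_iff \<open>{c1,c2} \<in> F\<close> \<open>{c1,c2} \<in> G\<close> unfolding residue_def by auto
      ultimately show ?thesis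
        by simp
    qed
  qed
qed

lemma pendant_detour_notin_range: "{{s,v},{t,v}} \<notin> swap_map ` {F. F \<subseteq> E \<and> path_le3 F s t}"
proof
  assume "{{s,v},{t,v}} \<in> swap_map ` {F. F \<subseteq> E \<and> path_le3 F s t}"
  then obtain F where "F \<in> {F. F \<subseteq> E \<and> path_le3 F s t}" "{{s,v},{t,v}} = swap_map F"
    by (rule imageE)
  then have F: "F \<subseteq> E" "path_le3 F s t" and eq: "swap_map F = {{s,v},{t,v}}"
    by simp_all
  then have "{c1,c2} \<in> F"
    using t_v_in_swap_map_iff by auto
  have "\<not> path_le3 {} s t" "\<not> path_through {} s t c1 c2"
    unfolding path_le3_def path_through_def by simp_all
  then have detour: "\<not> path_le3 (residue F) s t" "{s,v} \<notin> F"
    using swap_map_direct_iff[OF F \<open>{c1,c2} \<in> F\<close>] eq by simp_all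
  then have "residue F - {last_edge F} = {}"
    using swap_map_minus_detour[OF F(1) \<open>{c1,c2} \<in> F\<close>] eq by simp
  moreover obtain c where "{s,c} \<in> residue F"
    using path_le3_without_swapped_edges[OF F] detour(1) unfolding path_through_def by blast
  moreover have "{s,c} \<noteq> last_edge F"
    using distinct unfolding last_edge_def by (auto simp: doubleton_eq_iff)
  ultimately show False
    by blast
qed

theorem stronger_swap_to_pendant: "stronger 3 (card E) (swap_edge {c1,c2} {t,v} E) s t E s t"
proof -
  have "s \<noteq> t"
    using distinct by simp
  then have pathset_iff: "pathset 3 F s t \<longleftrightarrow> path_le3 F s t" for F
    by (rule pathset_3_iff_path_le3)
  show ?thesis
  proof (rule stronger_if_inj_on[where \<Phi>=swap_map and Z="{{s,v},{t,v}}"])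
    show "finite (swap_edge {c1,c2} {t,v} E)"
      using finite_E unfolding swap_edge_def by simp
    show "card (swap_edge {c1,c2} {t,v} E) = card E"
      using finite_E t_v_notin_E by (rule card_swap_edge)
    show "swap_map F \<subseteq> swap_edge {c1,c2} {t,v} E \<and> card (swap_map F) = card F \<and>
        pathset 3 (swap_map F) s t" if "F \<subseteq> E" "pathset 3 F s t" for F
      using swap_map_pathset[OF that(1)] that(2) by (simp add: pathset_iff)
    show "inj_on swap_map {F. F \<subseteq> E \<and> pathset 3 F s t}"
      using inj_on_swap_map by (simp add: pathset_iff)
    show "{{s,v},{t,v}} \<subseteq> swap_edge {c1,c2} {t,v} E"
      using c_edge pendant_edge distinct unfolding swap_edge_def by (auto simp: doubleton_eq_iff)
    show "pathset 3 {{s,v},{t,v}} s t"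
      using path_le3_pendant_detour[of "{}"] by (simp add: pathset_iff)
    show "{{s,v},{t,v}} \<notin> swap_map ` {F. F \<subseteq> E \<and> pathset 3 F s t}"
      using pendant_detour_notin_range by (simp add: pathset_iff)
  qed fact
qed

end

definition common_neighbours :: "nat set set \<Rightarrow> nat \<Rightarrow> nat \<Rightarrow> nat set" where
  "common_neighbours E s t = {c. c \<noteq> s \<and> c \<noteq> t \<and> {s,c} \<in> E \<and> {t,c} \<in> E}"

lemma irrelevant_if_not_within_common_neighbours:
  assumes tt: "tt_graph n m E s t"
    and no_bridge: "\<And>b. {v,b} \<in> E \<Longrightarrow> {b,t} \<in> E \<Longrightarrow> b = s"
    and s_nbr: "\<And>x. {s,x} \<in> E \<Longrightarrow> x \<noteq> v \<Longrightarrow> x \<noteq> t \<Longrightarrow> {t,x} \<in> E"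
    and t_nbr: "\<And>x. {t,x} \<in> E \<Longrightarrow> x \<noteq> s \<Longrightarrow> {s,x} \<in> E"
    and outside: "\<not> e \<subseteq> insert s (insert t (common_neighbours E s t))"
  shows "irrelevant 3 E s t e"
proof -
  let ?K = "insert s (insert t (common_neighbours E s t))"
  have "s \<noteq> t"
    using tt_graph_terminalsD[OF tt] by blast
  have kept: "{a,b} \<in> F - {e}" if "{a,b} \<in> F" "a \<in> ?K" "b \<in> ?K" for F a b
    using that outside by auto
  have common: "x \<in> ?K" if "{t,x} \<in> E" for x
    using t_nbr[OF that] that unfolding common_neighbours_def by auto
  have "path_le3 (F - {e}) s t" if F: "F \<subseteq> E" "path_le3 F s t" for F
    using F(2)
  proof (cases rule: path_le3_cases)
    case edge
    then show ?thesis
      using kept by (simp add: path_le3_edge)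
  next
    case (via x)
    have "{t,x} \<in> E"
      using via(4) F(1) by (auto simp: insert_commute)
    then have "x \<in> ?K"
      by (rule common)
    then show ?thesis
      using via kept by (intro path_le3_via[of x]) auto
  next
    case (via2 x y)
    have "{t,y} \<in> E"
      using via2(8) F(1) by (auto simp: insert_commute)
    then have "y \<in> ?K"
      by (rule common)
    have "x \<noteq> v"
    proof
      assume "x = v"
      then have "{v,y} \<in> E" "{y,t} \<in> E"
        using via2(7,8) F(1) by auto
      then show False
        using no_bridge via2(3) by blast
    qed
    then have "{t,x} \<in> E"
      using s_nbr via2(2,6) F(1) by auto
    then have "x \<in> ?K"
      by (rule common)
    then show ?thesis
      using via2 kept \<open>y \<in> ?K\<close> by (intro path_le3_via2[of x _ _ y]) auto
  qed
  then show ?thesis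
    by (simp add: irrelevant_3_iff[OF \<open>s \<noteq> t\<close>])
qed

lemma doubleton_in_triangle:
  "a \<in> {x,y,z} \<Longrightarrow> b \<in> {x,y,z} \<Longrightarrow> a \<noteq> b \<Longrightarrow> {a,b} \<in> {{x,y},{x,z},{y,z}}"
  by (auto simp: insert_commute)

lemma card_le_4_if_edges_within_triangle:
  assumes tt: "tt_graph n m E s t" and within: "\<forall>e\<in>E. e = f \<or> e \<subseteq> {x,y,z}"
  shows "card E \<le> 4"
proof -
  have "E \<subseteq> {f,{x,y},{x,z},{y,z}}"
  proof
    fix e
    assume "e \<in> E"
    show "e \<in> {f,{x,y},{x,z},{y,z}}"
    proof (cases "e = f")
      case False
      obtain a b where "e = {a,b}" "a \<noteq> b"
        by (metis tt_graph_edgeE[OF tt \<open>e \<in> E\<close>])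
      moreover have "e \<subseteq> {x,y,z}"
        using within False \<open>e \<in> E\<close> by blast
      ultimately show ?thesis
        using doubleton_in_triangle[of a x y z b] by simp
    qed simp
  qed
  moreover have "card {f,{x,y},{x,z},{y,z}} \<le> 4"
    by (auto simp: card_insert_if)
  ultimately show ?thesis
    by (meson card_mono finite.emptyI finite.insertI le_trans)
qed

lemma exists_stronger_swap_to_pendant:
  assumes tt: "tt_graph n m E s t" and pendant: "pendant_swap E s t v c1 c2"
  shows "\<exists>E'. tt_graph n m E' s t \<and> stronger 3 m E' s t E s t"
proof -
  have "t \<noteq> v" "t < n" "v < n"
    using pendant_swap.distinct[OF pendant] tt_graph_terminalsD[OF tt]
      tt_graph_edgeD[OF tt pendant_swap.pendant_edge[OF pendant]] by auto
  then show ?thesis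
    using pendant_swap.stronger_swap_to_pendant[OF pendant] tt_graph_card[OF tt]
      tt_graph_swap_edge[OF tt pendant_swap.t_v_notin_E[OF pendant]] by auto
qed

lemma exists_stronger_if_common_neighbours_clique:
  assumes tt: "tt_graph n m E s t" and "m \<ge> 5"
    and sv: "{s,v} \<in> E" "{t,v} \<notin> E" "v \<noteq> t"
    and no_bridge: "\<And>b. {v,b} \<in> E \<Longrightarrow> {b,t} \<in> E \<Longrightarrow> b = s"
    and s_nbr: "\<And>x. {s,x} \<in> E \<Longrightarrow> x \<noteq> v \<Longrightarrow> x \<noteq> t \<Longrightarrow> {t,x} \<in> E"
    and t_nbr: "\<And>x. {t,x} \<in> E \<Longrightarrow> x \<noteq> s \<Longrightarrow> {s,x} \<in> E"
    and clique: "\<And>c1 c2. c1 \<in> common_neighbours E s t \<Longrightarrow> c2 \<in> common_neighbours E s t \<Longrightarrow>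
      c1 \<noteq> c2 \<Longrightarrow> {c1,c2} \<in> E"
  shows "\<exists>E'. tt_graph n m E' s t \<and> stronger 3 m E' s t E s t"
proof -
  let ?C = "common_neighbours E s t"
  let ?K = "insert s (insert t ?C)"
  have "s \<noteq> t" "t < n" "v \<noteq> s" "v < n"
    using tt_graph_terminalsD[OF tt] tt_graph_edgeD[OF tt sv(1)] by auto
  have v_notin_K: "v \<notin> ?K"
    using sv \<open>v \<noteq> s\<close> unfolding common_neighbours_def by (auto simp: insert_commute)
  consider (outside) e where "e \<in> E" "e \<noteq> {s,v}" "\<not> e \<subseteq> ?K"
    | (pendant) c1 c2 where "\<forall>e\<in>E. e = {s,v} \<or> e \<subseteq> ?K" "c1 \<in> ?C" "c2 \<in> ?C" "c1 \<noteq> c2"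
    | (small) c where "\<forall>e\<in>E. e = {s,v} \<or> e \<subseteq> ?K" "?C \<subseteq> {c}"
  proof (cases "\<exists>e\<in>E. e \<noteq> {s,v} \<and> \<not> e \<subseteq> ?K")
    case True
    then show ?thesis
      using that(1) by auto
  next
    case False
    then have within: "\<forall>e\<in>E. e = {s,v} \<or> e \<subseteq> ?K"
      by simp
    show ?thesis
    proof (cases "\<exists>c1\<in>?C. \<exists>c2\<in>?C. c1 \<noteq> c2")
      case True
      then show ?thesis
        using that(2)[OF within] by auto
    next
      case False
      obtain c where "?C = {} \<or> c \<in> ?C"
        by auto
      then have "?C \<subseteq> {c}"
        using False by auto
      then show ?thesis
        using that(3)[OF within] by simp
    qed
  qed
  then show ?thesis
  proof cases
    case outside
    have "irrelevant 3 E s t e"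
      using irrelevant_if_not_within_common_neighbours[OF tt no_bridge s_nbr t_nbr outside(3)] .
    moreover have "\<not> path_le3 {{s,v}} s t"
      using \<open>s \<noteq> t\<close> sv(3) by (intro not_path_le3_if_isolated) auto
    moreover have "path_le3 (insert {t,v} {{s,v}}) s t"
      using \<open>v \<noteq> s\<close> sv(3) by (intro path_le3_via[of v]) (auto simp: insert_commute)
    ultimately show ?thesis
      using outside(1,2) sv(1) \<open>t < n\<close> \<open>v < n\<close>
      by (intro exists_stronger_swap_irrelevant_edge[OF tt outside(1) sv(2) sv(3)[symmetric]]) auto
  next
    case pendant
    have "pendant_swap E s t v c1 c2"
    proof
      show "finite E"
        using tt by (rule tt_graph_finite)
      show "{c1,c2} \<in> E"
        using clique pendant(2-4) .
      show "e = {s,v}" if "e \<in> E" "v \<in> e" for e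
        using pendant(1) that v_notin_K by blast
      show "distinct [s,t,v,c1,c2]"
        using pendant(2-4) \<open>s \<noteq> t\<close> \<open>v \<noteq> s\<close> sv(2,3) unfolding common_neighbours_def by auto
    qed (fact sv(1))
    then show ?thesis
      using tt by (intro exists_stronger_swap_to_pendant)
  next
    case small
    then have "\<forall>e\<in>E. e = {s,v} \<or> e \<subseteq> {s,t,c}"
      by blast
    then have "card E \<le> 4"
      using tt by (rule card_le_4_if_edges_within_triangle[rotated])
    then show ?thesis
      using tt_graph_card[OF tt] \<open>m \<ge> 5\<close> by simp
  qed
qed

lemma exists_stronger_if_private_neighbour:
  assumes tt: "tt_graph n m E s t" and "m \<ge> 5" and sv: "{s,v} \<in> E" "{t,v} \<notin> E" "v \<noteq> t"
  shows "\<exists>E'. tt_graph n m E' s t \<and> stronger 3 m E' s t E s t"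
proof (cases "\<exists>b. {v,b} \<in> E \<and> {b,t} \<in> E \<and> b \<noteq> s")
  case True
  then show ?thesis
    using exists_stronger_if_private_neighbour_bridge[OF tt sv] by blast
next
  case False
  then have no_bridge: "\<And>b. {v,b} \<in> E \<Longrightarrow> {b,t} \<in> E \<Longrightarrow> b = s"
    by blast
  have irr: "irrelevant 3 E s t {s,v}"
    using tt sv no_bridge by (rule irrelevant_private_edge)
  have "s \<noteq> t" "s < n" "t < n"
    using tt_graph_terminalsD[OF tt] by auto
  let ?C = "common_neighbours E s t"
  consider (s_private) x where "{s,x} \<in> E" "x \<noteq> v" "x \<noteq> t" "{t,x} \<notin> E"
    | (t_private) x where "{t,x} \<in> E" "x \<noteq> s" "{s,x} \<notin> E"
    | (nonadjacent) c1 c2 where "c1 \<in> ?C" "c2 \<in> ?C" "c1 \<noteq> c2" "{c1,c2} \<notin> E"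
    | (clique) "\<And>x. {s,x} \<in> E \<Longrightarrow> x \<noteq> v \<Longrightarrow> x \<noteq> t \<Longrightarrow> {t,x} \<in> E"
        "\<And>x. {t,x} \<in> E \<Longrightarrow> x \<noteq> s \<Longrightarrow> {s,x} \<in> E"
        "\<And>c1 c2. c1 \<in> ?C \<Longrightarrow> c2 \<in> ?C \<Longrightarrow> c1 \<noteq> c2 \<Longrightarrow> {c1,c2} \<in> E"
    by metis
  then show ?thesis
  proof cases
    case (s_private x)
    have "x \<noteq> s" "x < n"
      using tt_graph_edgeD[OF tt s_private(1)] by auto
    show ?thesis
    proof (rule exists_stronger_swap_irrelevant_edge[OF tt sv(1) _ s_private(3) \<open>x < n\<close> \<open>t < n\<close> irr])
      show "{x,t} \<notin> E"
        using s_private(4) by (simp add: insert_commute)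
      show "{{s,x}} \<subseteq> E - {{s,v}}"
        using s_private(1,2) by (auto simp: doubleton_eq_iff)
      show "\<not> path_le3 {{s,x}} s t"
        using \<open>s \<noteq> t\<close> s_private(3) by (intro not_path_le3_if_isolated) auto
      show "path_le3 (insert {x,t} {{s,x}}) s t"
        using \<open>x \<noteq> s\<close> s_private(3) by (intro path_le3_via[of x]) auto
    qed
  next
    case (t_private x)
    have "x \<noteq> t" "x < n"
      using tt_graph_edgeD[OF tt t_private(1)] by auto
    show ?thesis
    proof (rule exists_stronger_swap_irrelevant_edge[OF tt sv(1) t_private(3) _ \<open>s < n\<close> \<open>x < n\<close> irr])
      show "s \<noteq> x"
        using t_private(2) by simp
      show "{{t,x}} \<subseteq> E - {{s,v}}"
        using t_private(1) \<open>s \<noteq> t\<close> sv(3) by (auto simp: doubleton_eq_iff)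
      show "\<not> path_le3 {{t,x}} s t"
        using \<open>s \<noteq> t\<close> t_private(2) by (intro not_path_le3_if_isolated_source) auto
      show "path_le3 (insert {s,x} {{t,x}}) s t"
        using t_private(2) \<open>x \<noteq> t\<close> by (intro path_le3_via[of x]) (auto simp: insert_commute)
    qed
  next
    case (nonadjacent c1 c2)
    then have c: "c1 \<noteq> s" "c1 \<noteq> t" "c2 \<noteq> s" "c2 \<noteq> t" "{s,c1} \<in> E" "{t,c1} \<in> E" "{t,c2} \<in> E"
      unfolding common_neighbours_def by auto
    have "c1 < n" "c2 < n"
      using tt_graph_edgeD[OF tt c(5)] tt_graph_edgeD[OF tt c(7)] by auto
    show ?thesis
    proof (rule exists_stronger_swap_irrelevant_edge[OF tt sv(1) nonadjacent(4,3) \<open>c1 < n\<close> \<open>c2 < n\<close> irr])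
      show "{{s,c1},{c2,t}} \<subseteq> E - {{s,v}}"
        using c sv(2,3) \<open>s \<noteq> t\<close> by (auto simp: doubleton_eq_iff insert_commute)
      show "\<not> path_le3 {{s,c1},{c2,t}} s t"
        using c nonadjacent(3) \<open>s \<noteq> t\<close> by (intro not_path_le3_disjoint_edges) auto
      show "path_le3 (insert {c1,c2} {{s,c1},{c2,t}}) s t"
        using c nonadjacent(3) by (intro path_le3_via2[of c1 _ _ c2]) auto
    qed
  next
    case clique
    show ?thesis
      using exists_stronger_if_common_neighbours_clique[OF tt \<open>m \<ge> 5\<close> sv no_bridge clique] .
  qed
qed

lemma true_twins_iff:
  assumes "s \<noteq> t"
  shows "true_twins E s t \<longleftrightarrow> {s,t} \<in> E \<and> (\<forall>v. v \<noteq> s \<longrightarrow> v \<noteq> t \<longrightarrow> ({s,v} \<in> E \<longleftrightarrow> {t,v} \<in> E))"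
proof -
  have "t \<in> closed_nbhd E s \<longleftrightarrow> {s,t} \<in> E" "s \<in> closed_nbhd E t \<longleftrightarrow> {s,t} \<in> E"
    using assms unfolding closed_nbhd_def by (auto simp: insert_commute)
  moreover have "v \<in> closed_nbhd E u \<longleftrightarrow> {u,v} \<in> E" if "v \<noteq> u" for u v
    using that unfolding closed_nbhd_def by simp
  moreover have "s \<in> closed_nbhd E s" "t \<in> closed_nbhd E t"
    unfolding closed_nbhd_def by simp_all
  ultimately show ?thesis
    unfolding true_twins_def by (metis set_eq_iff)
qed

lemma edge_terminal_cases:
  assumes e: "e = {a,b}" "a \<noteq> b"
  obtains (terminals) "e = {s,t}" | (at_s) y where "e = {s,y}" "y \<noteq> s" "y \<noteq> t"
    | (at_t) y where "e = {y,t}" "y \<noteq> s" "y \<noteq> t"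
    | (inner) "a \<noteq> s" "a \<noteq> t" "b \<noteq> s" "b \<noteq> t"
proof (cases "a \<in> {s,t} \<or> b \<in> {s,t}")
  case True
  then consider "a = s" | "a = t" | "b = s" | "b = t"
    by blast
  then show ?thesis
  proof cases
    case 1
    then show ?thesis
      using that(1) that(2)[of b] e by (cases "b = t") auto
  next
    case 2
    then show ?thesis
      using that(1) that(3)[of b] e by (cases "b = s") (auto simp: insert_commute)
  next
    case 3
    then show ?thesis
      using that(1) that(2)[of a] e by (cases "a = t") (auto simp: insert_commute)
  next
    case 4
    then show ?thesis
      using that(1) that(3)[of a] e by (cases "a = s") auto
  qed
next
  case False
  then show ?thesis
    using that(4) by simp
qed

lemma relevant_if_within_closed_nbhd:
  assumes tt: "tt_graph n m E s t" and twins: "true_twins E s t"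
    and "e \<in> E" and within: "e \<subseteq> closed_nbhd E s"
  shows "\<not> irrelevant 3 E s t e"
proof -
  have "s \<noteq> t"
    using tt_graph_terminalsD[OF tt] by blast
  then have tw: "\<And>v. v \<noteq> s \<Longrightarrow> v \<noteq> t \<Longrightarrow> {s,v} \<in> E \<longleftrightarrow> {t,v} \<in> E"
    using twins true_twins_iff by simp
  have s_nbr: "{s,w} \<in> E" if "w \<in> e" "w \<noteq> s" for w
    using within that unfolding closed_nbhd_def by auto
  obtain a b where e: "e = {a,b}" "a \<noteq> b"
    by (metis tt_graph_edgeE[OF tt \<open>e \<in> E\<close>])
  from e show ?thesis
  proof (cases rule: edge_terminal_cases[where s=s and t=t])
    case terminals
    have "path_le3 {e} s t" "{e} - {e} = {}"
      using terminals by (simp_all add: path_le3_edge)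
    then show ?thesis
      using \<open>s \<noteq> t\<close> \<open>e \<in> E\<close> by (intro not_irrelevant_3I[of _ _ "{e}"]) (auto simp: path_le3_def)
  next
    case (at_s y)
    have "{y,t} \<in> E"
      using tw[OF at_s(2,3)] \<open>e \<in> E\<close> at_s(1) by (simp add: insert_commute)
    have "path_le3 {{s,y},{y,t}} s t"
      using at_s(2,3) by (intro path_le3_via[of y]) auto
    moreover have "{{s,y},{y,t}} - {e} = {{y,t}}"
      using at_s \<open>s \<noteq> t\<close> by (auto simp: doubleton_eq_iff)
    moreover have "\<not> path_le3 {{y,t}} s t"
      using at_s(2) \<open>s \<noteq> t\<close> by (intro not_path_le3_if_isolated_source) auto
    ultimately show ?thesis
      using \<open>s \<noteq> t\<close> \<open>e \<in> E\<close> \<open>{y,t} \<in> E\<close> at_s(1)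
      by (intro not_irrelevant_3I[where F="{{s,y},{y,t}}"]) auto
  next
    case (at_t y)
    have "{s,y} \<in> E"
      using s_nbr at_t by simp
    have "path_le3 {{s,y},{y,t}} s t"
      using at_t(2,3) by (intro path_le3_via[of y]) auto
    moreover have "{{s,y},{y,t}} - {e} = {{s,y}}"
      using at_t \<open>s \<noteq> t\<close> by (auto simp: doubleton_eq_iff)
    moreover have "\<not> path_le3 {{s,y}} s t"
      using at_t(3) \<open>s \<noteq> t\<close> by (intro not_path_le3_if_isolated) auto
    ultimately show ?thesis
      using \<open>s \<noteq> t\<close> \<open>e \<in> E\<close> \<open>{s,y} \<in> E\<close> at_t(1)
      by (intro not_irrelevant_3I[where F="{{s,y},{y,t}}"]) auto
  next
    case inner
    have "{s,a} \<in> E" "{t,b} \<in> E"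
      using s_nbr[of a] s_nbr[of b] tw[of b] inner e by auto
    have "path_le3 {{s,a},{a,b},{b,t}} s t"
      using inner e(2) by (intro path_le3_via2[of a _ _ b]) auto
    moreover have "{{s,a},{a,b},{b,t}} - {e} = {{s,a},{b,t}}"
      using inner e by (auto simp: doubleton_eq_iff)
    moreover have "\<not> path_le3 {{s,a},{b,t}} s t"
      using inner e(2) \<open>s \<noteq> t\<close> by (intro not_path_le3_disjoint_edges)
    ultimately show ?thesis
      using \<open>s \<noteq> t\<close> \<open>e \<in> E\<close> \<open>{s,a} \<in> E\<close> \<open>{t,b} \<in> E\<close> e(1)
      by (intro not_irrelevant_3I[where F="{{s,a},{a,b},{b,t}}"]) (auto simp: insert_commute)
  qed
qed

lemma exists_stronger_if_twins:
  assumes tt: "tt_graph n m E s t" and "m \<ge> 5" and twins: "true_twins E s t"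
    and "e \<in> E" and irr: "irrelevant 3 E s t e"
  shows "\<exists>E'. tt_graph n m E' s t \<and> stronger 3 m E' s t E s t"
proof -
  have "s \<noteq> t" "s < n"
    using tt_graph_terminalsD[OF tt] by auto
  obtain w where "w \<in> e" "w \<notin> closed_nbhd E s"
    using relevant_if_within_closed_nbhd[OF tt twins \<open>e \<in> E\<close>] irr by blast
  then have "w \<noteq> s" "{s,w} \<notin> E" "{t,w} \<notin> E"
    using twins unfolding true_twins_def closed_nbhd_def by auto
  have "w \<noteq> t"
    using \<open>w \<notin> closed_nbhd E s\<close> twins unfolding true_twins_def closed_nbhd_def by auto
  have "w < n"
    using tt_graph_edgeE[OF tt \<open>e \<in> E\<close>] \<open>w \<in> e\<close> by blast
  define E1 where "E1 = swap_edge e {s,w} E"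
  have tt1: "tt_graph n m E1 s t"
    unfolding E1_def using tt \<open>{s,w} \<notin> E\<close> \<open>w \<noteq> s\<close> \<open>s < n\<close> \<open>w < n\<close>
    by (intro tt_graph_swap_edge) auto
  have "\<forall>i\<in>{1..m}. Nid 3 i E s t \<le> Nid 3 i E1 s t"
    unfolding E1_def using Nid_le_swap_irrelevant_edge[OF tt_graph_finite[OF tt] \<open>{s,w} \<notin> E\<close> irr] by blast
  moreover have "{s,w} \<in> E1" "{t,w} \<notin> E1"
    unfolding E1_def swap_edge_def using \<open>e \<in> E\<close> \<open>{t,w} \<notin> E\<close> \<open>s \<noteq> t\<close>
    by (auto simp: doubleton_eq_iff)
  then obtain E2 where "tt_graph n m E2 s t" "stronger 3 m E2 s t E1 s t"
    using exists_stronger_if_private_neighbour[OF tt1 \<open>m \<ge> 5\<close> _ _ \<open>w \<noteq> t\<close>] by blast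
  ultimately show ?thesis
    using stronger_le_trans by blast
qed

lemma exists_stronger_if_not_in_Tstar:
  assumes tt: "tt_graph n m E s t" and "m \<ge> 5" and "\<not> in_Tstar E s t"
  shows "\<exists>E'. tt_graph n m E' s t \<and> stronger 3 m E' s t E s t"
proof -
  have "s \<noteq> t"
    using tt_graph_terminalsD[OF tt] by blast
  consider (nonadjacent) "{s,t} \<notin> E"
    | (s_private) v where "{s,v} \<in> E" "{t,v} \<notin> E" "v \<noteq> t"
    | (t_private) v where "{t,v} \<in> E" "{s,v} \<notin> E" "v \<noteq> s"
    | (twins) "true_twins E s t"
    using true_twins_iff[OF \<open>s \<noteq> t\<close>] by metis
  then show ?thesis
  proof cases
    case nonadjacent
    then show ?thesis
      using exists_stronger_if_terminals_nonadjacent[OF tt] \<open>m \<ge> 5\<close> by simp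
  next
    case s_private
    then show ?thesis
      using exists_stronger_if_private_neighbour[OF tt \<open>m \<ge> 5\<close>] by blast
  next
    case t_private
    then obtain E' where "tt_graph n m E' t s" "stronger 3 m E' t s E t s"
      using exists_stronger_if_private_neighbour[OF tt_graph_commute[OF tt] \<open>m \<ge> 5\<close>] by blast
    then show ?thesis
      using tt_graph_commute stronger_3_commute \<open>s \<noteq> t\<close> by blast
  next
    case twins
    then obtain e where "e \<in> E" "irrelevant 3 E s t e"
      using assms(3) unfolding in_Tstar_def by blast
    then show ?thesis
      using exists_stronger_if_twins[OF tt \<open>m \<ge> 5\<close> twins] by blast
  qed
qed

theorem lemma10:
  fixes n m :: nat and E :: "nat set set" and s t :: nat
  assumes "n \<ge> 5" and "m \<ge> 5"
    and "tt_graph n m E s t"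
    and "\<not> in_Tstar E s t"
  shows "\<exists>E' s' t'. tt_graph n m E' s' t' \<and> in_Tstar E' s' t' \<and> stronger 3 m E' s' t' E s t"
proof -
  have "\<exists>E'. tt_graph n m E' s t \<and> in_Tstar E' s t \<and> stronger 3 m E' s t E s t"
    using exists_stronger_if_not_in_Tstar[OF _ \<open>m \<ge> 5\<close>] assms(3,4)
    by (rule exists_stronger_satisfying_if_improvable[where Q="\<lambda>E. in_Tstar E s t"])
  then show ?thesis
    by blast
qed

end
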